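(* Let $1\le k\le n$. There is no element $g\in\mathrm{Sp}(n,1)$ such that every element of $g\left(I_{n-k}\oplus\mathrm{Sp}(k,1)\right)g^{-1}$ has trace a complex number.
   Context: $\mathrm{Sp}(n,1)=\{A\in\mathrm{GL}(n+1,\mathbb H):A^*I_{n,1}A=I_{n,1}\}$ with $I_{n,1}=\mathrm{diag}(1,\dots,1,-1)$ ($n$ ones), $\mathbb H$ the quaternions. $I_{n-k}\oplus\mathrm{Sp}(k,1)$ denotes the subgroup of block-diagonal matrices $\mathrm{diag}(I_{n-k},B)$ with $I_{n-k}$ the identity matrix of size $n-k$ and $B\in\mathrm{Sp}(k,1)$ (defined analogously with $I_{k,1}$). The trace of a quaternionic matrix is the sum of its diagonal entries; "complex number" means an element of $\mathbb C=\mathbb R+\mathbb Ri\subset\mathbb H$. *)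

theory Defs
  imports Complex_Main
begin

datatype quat = Quat (qRe: real) (qI: real) (qJ: real) (qK: real)

instantiation quat :: ring_1
begin
definition "0 = Quat 0 0 0 0"
definition "1 = Quat 1 0 0 0"
definition "x + y = Quat (qRe x + qRe y) (qI x + qI y) (qJ x + qJ y) (qK x + qK y)"
definition "x - y = Quat (qRe x - qRe y) (qI x - qI y) (qJ x - qJ y) (qK x - qK y)"
definition "- x = Quat (- qRe x) (- qI x) (- qJ x) (- qK x)"
text \<open>Hamilton product: i^2 = j^2 = k^2 = ijk = -1.\<close>
definition "x * y = Quat
   (qRe x * qRe y - qI x * qI y - qJ x * qJ y - qK x * qK y)
   (qRe x * qI y + qI x * qRe y + qJ x * qK y - qK x * qJ y)
   (qRe x * qJ y - qI x * qK y + qJ x * qRe y + qK x * qI y)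
   (qRe x * qK y + qI x * qJ y - qJ x * qI y + qK x * qRe y)"
instance
  by standard (auto simp: zero_quat_def one_quat_def plus_quat_def minus_quat_def
      uminus_quat_def times_quat_def algebra_simps intro: quat.expand)
end

definition qcnj :: "quat \<Rightarrow> quat" where
  "qcnj x = Quat (qRe x) (- qI x) (- qJ x) (- qK x)"

definition is_complex_quat :: "quat \<Rightarrow> bool" where
  "is_complex_quat x \<longleftrightarrow> qJ x = 0 \<and> qK x = 0"

text \<open>An m x m quaternionic matrix is represented by a function
  nat \<Rightarrow> nat \<Rightarrow> quat whose entries vanish outside the index range {0..<m}.\<close>
type_synonym qmat = "nat \<Rightarrow> nat \<Rightarrow> quat"

definition qmat_of_size :: "nat \<Rightarrow> qmat \<Rightarrow> bool" where
  "qmat_of_size m A \<longleftrightarrow> (\<forall>i j. (m \<le> i \<or> m \<le> j) \<longrightarrow> A i j = 0)"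

definition qmat_mult :: "nat \<Rightarrow> qmat \<Rightarrow> qmat \<Rightarrow> qmat" where
  "qmat_mult m A B = (\<lambda>i j. \<Sum>l<m. A i l * B l j)"

definition qmat_adj :: "qmat \<Rightarrow> qmat" where
  "qmat_adj A = (\<lambda>i j. qcnj (A j i))"

definition qmat_id :: "nat \<Rightarrow> qmat" where
  "qmat_id m = (\<lambda>i j. if i = j \<and> i < m then 1 else 0)"

definition qmat_trace :: "nat \<Rightarrow> qmat \<Rightarrow> quat" where
  "qmat_trace m A = (\<Sum>i<m. A i i)"

definition qmat_inverse_of :: "nat \<Rightarrow> qmat \<Rightarrow> qmat \<Rightarrow> bool" where
  "qmat_inverse_of m B A \<longleftrightarrow> qmat_of_size m B \<and>
     qmat_mult m A B = qmat_id m \<and> qmat_mult m B A = qmat_id m"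

definition qGL :: "nat \<Rightarrow> qmat set" where
  "qGL m = {A. qmat_of_size m A \<and> (\<exists>B. qmat_inverse_of m B A)}"

definition I_n1 :: "nat \<Rightarrow> qmat" where
  "I_n1 n = (\<lambda>i j. if i = j \<and> i < n then 1 else if i = n \<and> j = n then -1 else 0)"

definition Sp_n1 :: "nat \<Rightarrow> qmat set" where
  "Sp_n1 n = {A \<in> qGL (n+1).
      qmat_mult (n+1) (qmat_mult (n+1) (qmat_adj A) (I_n1 n)) A = I_n1 n}"

definition block_embed :: "nat \<Rightarrow> nat \<Rightarrow> qmat \<Rightarrow> qmat" where
  "block_embed n k B = (\<lambda>i j.
      if i < n - k \<and> j < n - k then (if i = j then 1 else 0)
      else if n - k \<le> i \<and> n - k \<le> j \<and> i \<le> n \<and> j \<le> n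
        then B (i - (n - k)) (j - (n - k))
      else 0)"

definition Sp_block :: "nat \<Rightarrow> nat \<Rightarrow> qmat set" where
  "Sp_block n k = block_embed n k ` Sp_n1 k"

end

theory Submission
  imports Defs
begin

(* Conjugating diag(1,...,1,u) by g, for a unit quaternion u, changes the trace by
   tau(u) = p u p' - (SUM i<n. a_i u a_i'), where (a_0,...,a_(n-1),p) is the last column of g
   and x' is the quaternionic conjugate (because g^-1 = I_n1 g^* I_n1).  Since tau is odd and
   all these traces are complex, the j-component of tau(u) vanishes for every unit u.  But the
   last column has hermitian norm -1, i.e. |p|^2 = 1 + (SUM i<n. |a_i|^2), and for the unit u
   that p rotates into j the j-component of tau(u) is at least |p|^2 - (SUM i<n. |a_i|^2) = 1. *)

definition quat_normsq :: "quat \<Rightarrow> real" where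
  "quat_normsq x = qRe x ^ 2 + qI x ^ 2 + qJ x ^ 2 + qK x ^ 2"

lemma quat_sel_simps [simp]:
  "qRe 0 = 0" "qI 0 = 0" "qJ 0 = 0" "qK 0 = 0"
  "qRe 1 = 1" "qI 1 = 0" "qJ 1 = 0" "qK 1 = 0"
  "qRe (x + y) = qRe x + qRe y" "qI (x + y) = qI x + qI y"
  "qJ (x + y) = qJ x + qJ y" "qK (x + y) = qK x + qK y"
  "qRe (x - y) = qRe x - qRe y" "qI (x - y) = qI x - qI y"
  "qJ (x - y) = qJ x - qJ y" "qK (x - y) = qK x - qK y"
  "qRe (- x) = - qRe x" "qI (- x) = - qI x" "qJ (- x) = - qJ x" "qK (- x) = - qK x"
  "qRe (qcnj x) = qRe x" "qI (qcnj x) = - qI x" "qJ (qcnj x) = - qJ x" "qK (qcnj x) = - qK x"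
  by (simp_all add: zero_quat_def one_quat_def plus_quat_def minus_quat_def uminus_quat_def
      qcnj_def)

lemma quat_mult_sel [simp]:
  "qRe (x * y) = qRe x * qRe y - qI x * qI y - qJ x * qJ y - qK x * qK y"
  "qI (x * y) = qRe x * qI y + qI x * qRe y + qJ x * qK y - qK x * qJ y"
  "qJ (x * y) = qRe x * qJ y - qI x * qK y + qJ x * qRe y + qK x * qI y"
  "qK (x * y) = qRe x * qK y + qI x * qJ y - qJ x * qI y + qK x * qRe y"
  by (simp_all add: times_quat_def)

lemma quat_eqI: "qRe x = qRe y \<Longrightarrow> qI x = qI y \<Longrightarrow> qJ x = qJ y \<Longrightarrow> qK x = qK y \<Longrightarrow> x = y"
  by (rule quat.expand) simp

lemma qcnj_0 [simp]: "qcnj 0 = 0"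
  by (rule quat_eqI) simp_all

lemma qcnj_1 [simp]: "qcnj 1 = 1"
  by (rule quat_eqI) simp_all

lemma qRe_sum: "qRe (sum f A) = (\<Sum>x\<in>A. qRe (f x))"
  by (induction A rule: infinite_finite_induct) auto

lemma qJ_sum: "qJ (sum f A) = (\<Sum>x\<in>A. qJ (f x))"
  by (induction A rule: infinite_finite_induct) auto

lemma quat_normsq_nonneg: "quat_normsq x \<ge> 0"
  unfolding quat_normsq_def by simp

lemma quat_normsq_mult: "quat_normsq (x * y) = quat_normsq x * quat_normsq y"
  unfolding quat_normsq_def by simp algebra

lemma quat_normsq_cnj: "quat_normsq (qcnj x) = quat_normsq x"
  unfolding quat_normsq_def by simp

lemma quat_mult_cnj: "x * qcnj x = Quat (quat_normsq x) 0 0 0" "qcnj x * x = Quat (quat_normsq x) 0 0 0"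
  by (auto intro!: quat_eqI simp: quat_normsq_def power2_eq_square algebra_simps)

lemma qJ_le_sqrt_normsq: "qJ x \<le> sqrt (quat_normsq x)"
  by (rule real_le_rsqrt) (simp add: quat_normsq_def)

lemma qJ_conj_unit_le:
  assumes "quat_normsq u = 1"
  shows "qJ (a * u * qcnj a) \<le> quat_normsq a"
  using qJ_le_sqrt_normsq[of "a * u * qcnj a"] assms
  by (simp add: quat_normsq_mult quat_normsq_cnj quat_normsq_nonneg)

lemma qJ_conj_rotated_j:
  "qJ (p * (Quat r 0 0 0 * (qcnj p * Quat 0 0 1 0 * p)) * qcnj p) = r * quat_normsq p ^ 2"
  unfolding quat_normsq_def by simp algebra

lemma exists_unit_qJ_conj_ge_1:
  assumes "quat_normsq p = 1 + (\<Sum>i\<in>I. quat_normsq (a i))"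
  shows "\<exists>u. quat_normsq u = 1 \<and> 1 \<le> qJ (p * u * qcnj p) - (\<Sum>i\<in>I. qJ (a i * u * qcnj (a i)))"
proof -
  define N where "N = quat_normsq p"
  have N: "N \<ge> 1"
    using assms sum_nonneg[of I "\<lambda>i. quat_normsq (a i)"] quat_normsq_nonneg unfolding N_def by auto
  \<comment> \<open>u = p' j p / |p|^2 (with p' the conjugate), so that p u p' = |p|^2 j\<close>
  define u where "u = Quat (1 / N) 0 0 0 * (qcnj p * Quat 0 0 1 0 * p)"
  have u: "quat_normsq u = 1"
    using N by (simp add: u_def quat_normsq_mult quat_normsq_cnj N_def[symmetric])
      (simp add: quat_normsq_def power2_eq_square)
  have "qJ (p * u * qcnj p) = N"
    using N by (simp only: u_def qJ_conj_rotated_j N_def[symmetric]) (simp add: power2_eq_square)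
  moreover have "(\<Sum>i\<in>I. qJ (a i * u * qcnj (a i))) \<le> (\<Sum>i\<in>I. quat_normsq (a i))"
    using u by (intro sum_mono qJ_conj_unit_le)
  ultimately show ?thesis
    using u assms unfolding N_def by force
qed

definition qdiag :: "nat \<Rightarrow> (nat \<Rightarrow> quat) \<Rightarrow> qmat" where
  "qdiag m d = (\<lambda>i j. if i = j \<and> i < m then d i else 0)"

lemma qmat_of_size_qdiag: "qmat_of_size m (qdiag m d)"
  unfolding qmat_of_size_def qdiag_def by auto

lemma qmat_mult_assoc:
  "qmat_mult m (qmat_mult m A B) C = qmat_mult m A (qmat_mult m B C)"
  unfolding qmat_mult_def
  by (intro ext) (auto simp: sum_distrib_left sum_distrib_right mult.assoc intro!: sum.swap[THEN trans])

lemma qmat_mult_qdiag_right: "j < m \<Longrightarrow> qmat_mult m A (qdiag m d) i j = A i j * d j"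
  unfolding qmat_mult_def qdiag_def by (simp add: if_distrib cong: if_cong)

lemma qmat_mult_qdiag_left:
  assumes "i < m"
  shows "qmat_mult m (qdiag m d) A i j = d i * A i j"
proof -
  have "qmat_mult m (qdiag m d) A i j = (\<Sum>l<m. if l = i then d i * A i j else 0)"
    unfolding qmat_mult_def qdiag_def by (rule sum.cong) auto
  then show ?thesis
    using assms by simp
qed

lemma qmat_mult_qdiag_qdiag: "qmat_mult m (qdiag m d) (qdiag m e) = qdiag m (\<lambda>i. d i * e i)"
proof (intro ext)
  fix i j
  show "qmat_mult m (qdiag m d) (qdiag m e) i j = qdiag m (\<lambda>i. d i * e i) i j"
    by (cases "j < m") (auto simp: qmat_mult_qdiag_right, auto simp: qdiag_def qmat_mult_def)
qed

lemma qmat_id_eq_qdiag: "qmat_id m = qdiag m (\<lambda>_. 1)"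
  unfolding qmat_id_def qdiag_def by (intro ext) auto

lemma qmat_adj_qdiag: "qmat_adj (qdiag m d) = qdiag m (\<lambda>i. qcnj (d i))"
  unfolding qmat_adj_def qdiag_def by (intro ext) auto

definition hyp_sign :: "nat \<Rightarrow> nat \<Rightarrow> quat" where
  "hyp_sign n i = (if i < n then 1 else -1)"

lemma I_n1_eq_qdiag: "I_n1 n = qdiag (Suc n) (hyp_sign n)"
  unfolding I_n1_def qdiag_def hyp_sign_def by (intro ext) auto

lemma I_n1_square: "qmat_mult (Suc n) (I_n1 n) (I_n1 n) = qmat_id (Suc n)"
  unfolding I_n1_eq_qdiag qmat_mult_qdiag_qdiag qmat_id_eq_qdiag hyp_sign_def
  by (rule arg_cong[where f="qdiag (Suc n)"]) auto

lemma Sp_n1_inverse_entry: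
  assumes g: "g \<in> Sp_n1 n" and h: "qmat_inverse_of (Suc n) h g" and "i < Suc n" "j < Suc n"
  shows "h i j = hyp_sign n i * qcnj (g j i) * hyp_sign n j"
proof -
  define M where "M = qmat_mult (Suc n)"
  define E where "E = I_n1 n"
  have gEg: "M (M (qmat_adj g) E) g = E" and gh: "M g h = qmat_id (Suc n)"
    using g h unfolding Sp_n1_def qmat_inverse_of_def M_def E_def by auto
  have "h i j = M (qmat_id (Suc n)) h i j"
    using \<open>i < Suc n\<close> by (simp add: M_def qmat_id_eq_qdiag qmat_mult_qdiag_left)
  also have "\<dots> = M (M E (M (M (qmat_adj g) E) g)) h i j"
    using I_n1_square gEg unfolding M_def E_def by simp
  also have "\<dots> = M (M E (M (qmat_adj g) E)) (M g h) i j"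
    unfolding M_def qmat_mult_assoc ..
  also have "\<dots> = M E (M (qmat_adj g) E) i j"
    using gh \<open>j < Suc n\<close> unfolding M_def qmat_id_eq_qdiag by (simp add: qmat_mult_qdiag_right)
  also have "\<dots> = hyp_sign n i * qcnj (g j i) * hyp_sign n j"
    using assms(3,4) unfolding M_def E_def I_n1_eq_qdiag
    by (simp add: qmat_mult_qdiag_right qmat_mult_qdiag_left qmat_adj_def mult.assoc)
  finally show ?thesis .
qed

lemma Sp_n1_column_norms:
  assumes "g \<in> Sp_n1 n" "j < Suc n"
  shows "(\<Sum>l<n. quat_normsq (g l j)) - quat_normsq (g n j) = (if j < n then 1 else -1)"
proof -
  have "(\<Sum>l<Suc n. qcnj (g l j) * hyp_sign n l * g l j) =
        qmat_mult (Suc n) (qmat_mult (Suc n) (qmat_adj g) (I_n1 n)) g j j"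
    unfolding qmat_mult_def[of _ "qmat_mult _ _ _"] I_n1_eq_qdiag
    by (rule sum.cong) (auto simp: qmat_mult_qdiag_right qmat_adj_def)
  also have "\<dots> = I_n1 n j j"
    using assms(1) unfolding Sp_n1_def by simp
  finally have "qRe (\<Sum>l<Suc n. qcnj (g l j) * hyp_sign n l * g l j) = qRe (I_n1 n j j)"
    by simp
  moreover have "qRe (qcnj (g l j) * hyp_sign n l * g l j) =
                 (if l < n then quat_normsq (g l j) else - quat_normsq (g l j))" for l
    unfolding hyp_sign_def quat_normsq_def by (auto simp: power2_eq_square)
  ultimately show ?thesis
    using assms(2) by (auto simp: qRe_sum I_n1_def)
qed

definition diag_last :: "nat \<Rightarrow> quat \<Rightarrow> qmat" where
  "diag_last n u = qdiag (Suc n) (\<lambda>l. if l < n then 1 else u)"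

lemma diag_last_in_Sp_n1:
  assumes "quat_normsq u = 1"
  shows "diag_last k u \<in> Sp_n1 k"
proof -
  have u: "u * qcnj u = 1" "qcnj u * u = 1"
    using assms by (simp_all add: quat_mult_cnj one_quat_def)
  have "qmat_inverse_of (Suc k) (diag_last k (qcnj u)) (diag_last k u)"
    unfolding qmat_inverse_of_def diag_last_def
    by (simp add: qmat_of_size_qdiag qmat_mult_qdiag_qdiag qmat_id_eq_qdiag u if_distrib
        cong: if_cong)
  moreover have "qmat_mult (Suc k) (qmat_mult (Suc k) (qmat_adj (diag_last k u)) (I_n1 k))
                   (diag_last k u) = I_n1 k"
    unfolding diag_last_def I_n1_eq_qdiag qmat_adj_qdiag qmat_mult_qdiag_qdiag hyp_sign_def
    by (rule arg_cong[where f="qdiag (Suc k)"]) (auto simp: u)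
  ultimately show ?thesis
    unfolding Sp_n1_def qGL_def diag_last_def by (auto simp: qmat_of_size_qdiag)
qed

lemma block_embed_diag_last:
  "1 \<le> k \<Longrightarrow> k \<le> n \<Longrightarrow> block_embed n k (diag_last k u) = diag_last n u"
  unfolding block_embed_def diag_last_def qdiag_def by (intro ext) auto

lemma diag_last_in_Sp_block:
  "quat_normsq u = 1 \<Longrightarrow> 1 \<le> k \<Longrightarrow> k \<le> n \<Longrightarrow> diag_last n u \<in> Sp_block n k"
  unfolding Sp_block_def by (metis block_embed_diag_last diag_last_in_Sp_n1 image_eqI)

lemma trace_conj_diag_last:
  "qmat_trace (Suc n) (qmat_mult (Suc n) (qmat_mult (Suc n) g (diag_last n u)) h) =
   qmat_trace (Suc n) (qmat_mult (Suc n) (qmat_mult (Suc n) g (diag_last n 0)) h) +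
   (\<Sum>i<Suc n. g i n * u * h n i)"
proof -
  have "qmat_trace (Suc n) (qmat_mult (Suc n) (qmat_mult (Suc n) g (diag_last n v)) h) =
        (\<Sum>i<Suc n. (\<Sum>l<n. g i l * h l i) + g i n * v * h n i)" for v
    unfolding qmat_trace_def qmat_mult_def[of _ "qmat_mult _ _ _"] diag_last_def
    by (intro sum.cong refl) (simp add: qmat_mult_qdiag_right)
  then show ?thesis
    by (simp add: sum.distrib)
qed

lemma qJ_last_column_conj_eq_0:
  assumes "\<And>v. quat_normsq v = 1 \<Longrightarrow>
      is_complex_quat (qmat_trace (Suc n) (qmat_mult (Suc n) (qmat_mult (Suc n) g (diag_last n v)) h))"
    and "quat_normsq u = 1"
  shows "qJ (\<Sum>i<Suc n. g i n * u * h n i) = 0"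
proof -
  define c where "c = qmat_trace (Suc n) (qmat_mult (Suc n) (qmat_mult (Suc n) g (diag_last n 0)) h)"
  define \<tau> where "\<tau> v = (\<Sum>i<Suc n. g i n * v * h n i)" for v
  have shift: "qJ c + qJ (\<tau> v) = 0" if "quat_normsq v = 1" for v
  proof -
    have "qmat_trace (Suc n) (qmat_mult (Suc n) (qmat_mult (Suc n) g (diag_last n v)) h) = c + \<tau> v"
      unfolding c_def \<tau>_def by (rule trace_conj_diag_last)
    then show ?thesis
      using assms(1)[OF that] by (simp add: is_complex_quat_def)
  qed
  have "quat_normsq (- u) = 1"
    using assms(2) by (simp add: quat_normsq_def)
  moreover have "\<tau> (- u) = - \<tau> u"
    by (simp add: \<tau>_def sum_negf)
  ultimately have "qJ (\<tau> u) = 0"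
    using shift[of u] shift[of "- u"] assms(2) by simp
  then show ?thesis
    unfolding \<tau>_def .
qed

lemma Sp_n1_conj_last_column:
  assumes "g \<in> Sp_n1 n" and "qmat_inverse_of (Suc n) h g"
  shows "(\<Sum>i<Suc n. g i n * u * h n i) =
         g n n * u * qcnj (g n n) - (\<Sum>i<n. g i n * u * qcnj (g i n))"
proof -
  have "h n i = (if i < n then - qcnj (g i n) else qcnj (g i n))" if "i < Suc n" for i
    using Sp_n1_inverse_entry[OF assms _ that] by (simp add: hyp_sign_def)
  then show ?thesis
    by (simp add: sum_negf)
qed

theorem proposition3p2:
  fixes n k :: nat
  assumes "1 \<le> k" and "k \<le> n"
  shows "\<not> (\<exists>g \<in> Sp_n1 n. \<exists>ginv. qmat_inverse_of (n+1) ginv g \<and>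
            (\<forall>A \<in> Sp_block n k.
               is_complex_quat (qmat_trace (n+1) (qmat_mult (n+1) (qmat_mult (n+1) g A) ginv))))"
proof
  assume "\<exists>g \<in> Sp_n1 n. \<exists>ginv. qmat_inverse_of (n+1) ginv g \<and>
            (\<forall>A \<in> Sp_block n k.
               is_complex_quat (qmat_trace (n+1) (qmat_mult (n+1) (qmat_mult (n+1) g A) ginv)))"
  then obtain g h where g: "g \<in> Sp_n1 n" and h: "qmat_inverse_of (Suc n) h g"
    and complex: "\<And>A. A \<in> Sp_block n k \<Longrightarrow>
      is_complex_quat (qmat_trace (Suc n) (qmat_mult (Suc n) (qmat_mult (Suc n) g A) h))"
    by auto
  have qJ_eq_0: "qJ (\<Sum>i<Suc n. g i n * u * h n i) = 0" if "quat_normsq u = 1" for u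
    using qJ_last_column_conj_eq_0[OF complex[OF diag_last_in_Sp_block[OF _ assms]] that] .
  have "quat_normsq (g n n) = 1 + (\<Sum>i<n. quat_normsq (g i n))"
    using Sp_n1_column_norms[OF g, of n] by simp
  then obtain u where "quat_normsq u = 1"
    and "1 \<le> qJ (g n n * u * qcnj (g n n)) - (\<Sum>i<n. qJ (g i n * u * qcnj (g i n)))"
    using exists_unit_qJ_conj_ge_1[where p = "g n n" and I = "{..<n}" and a = "\<lambda>i. g i n"] by blast
  moreover have "qJ (g n n * u * qcnj (g n n) - (\<Sum>i<n. g i n * u * qcnj (g i n))) = 0"
    using qJ_eq_0[OF \<open>quat_normsq u = 1\<close>] unfolding Sp_n1_conj_last_column[OF g h] .
  ultimately show False
    by (simp add: qJ_sum del: quat_mult_sel)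
qed

end
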